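(* Let $U_1,U_2$ be two users at fixed positions $(x_1,y_1),(x_2,y_2)$ with distances $d_k=\sqrt{x_k^2+y_k^2}$ from a base station at the origin, $d_1<d_2$. Let the estimated positions be $(\hat x_k,\hat y_k)$ with $\hat x_k\sim\mathcal N(x_k,\sigma_{ob}^2)$, $\hat y_k\sim\mathcal N(y_k,\sigma_{ob}^2)$, all mutually independent, and $\hat d_k=\sqrt{\hat x_k^2+\hat y_k^2}$. Let the channel coefficients be $r_k=h_kd_k^{-\alpha/2}$ with path loss exponent $\alpha>0$ and $h_1,h_2$ i.i.d. $\mathcal{CN}(0,1)$ (Rayleigh fading), independent of the position estimates. Define the decoding order error probability $$P_e^2=\Pr\{\hat d_1<\hat d_2,\ |r_1|^2<|r_2|^2\}+\Pr\{\hat d_1>\hat d_2,\ |r_1|^2>|r_2|^2\}.$$ Then $$P_e^2=\frac{D-1}{D+1}P_e^1+\frac{1}{D+1},$$ where $D=d_2^\alpha/d_1^\alpha$ and $P_e^1=\Pr\{\hat d_1>\hat d_2\}$.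
   Context: $P_e^1=\Pr\{\hat d_1>\hat d_2\}$ is the probability that the estimated distances are in the wrong order (the fading-free decoding order error probability). *)

theory Defs
  imports "HOL-Probability.Probability"
begin

definition bs_dist :: "real \<Rightarrow> real \<Rightarrow> real" where
  "bs_dist x y = sqrt (x\<^sup>2 + y\<^sup>2)"

definition chan :: "real \<Rightarrow> real \<Rightarrow> complex \<Rightarrow> complex" where
  "chan \<alpha> d h = h * complex_of_real (d powr (- \<alpha> / 2))"

end

theory Submission
  imports Defs
begin

text \<open>
  With \<open>h\<^sub>k = a\<^sub>k + i b\<^sub>k\<close> the received power is \<open>|r\<^sub>k|\<^sup>2 = d\<^sub>k\<^sup>-\<^sup>\<alpha> E\<^sub>k\<close>, where
  \<open>E\<^sub>k = a\<^sub>k\<^sup>2 + b\<^sub>k\<^sup>2\<close> is standard exponential: slicing the Gaussian density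
  \<open>exp (-\<bar>p\<bar>\<^sup>2) / \<pi>\<close> into its level sets shows that the disc \<open>\<bar>p\<bar>\<^sup>2 \<le> t\<close> has mass
  \<open>1 - exp (-t)\<close>. For independent standard exponentials
  \<open>Pr{c\<^sub>1 E\<^sub>1 < c\<^sub>2 E\<^sub>2} = c\<^sub>2 / (c\<^sub>1 + c\<^sub>2)\<close>, which is \<open>1 / (D + 1)\<close> for \<open>c\<^sub>k = d\<^sub>k\<^sup>-\<^sup>\<alpha>\<close>.
  The fading is independent of the position estimates, so each term of \<open>P\<^sub>e\<^sup>2\<close> is a
  position probability times a fading probability. Finally \<open>Pr{dh\<^sub>1 < dh\<^sub>2} = 1 - P\<^sub>e\<^sup>1\<close>:
  the tie \<open>dh\<^sub>1 = dh\<^sub>2\<close> says \<open>xh\<^sub>1\<^sup>2 = xh\<^sub>2\<^sup>2 + yh\<^sub>2\<^sup>2 - yh\<^sub>1\<^sup>2\<close>, a null event since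
  \<open>xh\<^sub>1\<close> has a density and is independent of the right-hand side. Hence
  \<open>P\<^sub>e\<^sup>2 = (1 - P\<^sub>e\<^sup>1) / (D + 1) + P\<^sub>e\<^sup>1 D / (D + 1)\<close>.
\<close>

abbreviation disc :: "real \<Rightarrow> (real \<times> real) set"
  where "disc t \<equiv> {p. (norm p)\<^sup>2 \<le> t}"

abbreviation disc_layers :: "real \<Rightarrow> ((real \<times> real) \<times> real) set"
  where "disc_layers t \<equiv> {(p, u). (norm p)\<^sup>2 \<le> u \<and> u \<le> t}"

lemma emeasure_lborel_disc:
  "emeasure lborel (disc u) = ennreal (pi * u)"
proof (cases "u \<ge> 0")
  case True
  then have "disc u = cball 0 (sqrt u)"
    by (auto simp: real_le_rsqrt) (metis norm_ge_zero power_mono real_sqrt_pow2)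
  with True show ?thesis
    by (simp add: emeasure_cball unit_ball_vol_2 mult.commute)
next
  case False
  then have empty: "disc u = {}"
    by (auto intro: order.trans[OF zero_le_power2])
  show ?thesis
    unfolding empty using False by (simp add: ennreal_neg mult_nonneg_nonpos)
qed

lemma ennreal_exp_neg_eq_add_nn_integral:
  assumes "(s :: real) \<le> t"
  shows "ennreal (exp (- s)) = exp (- t) + (\<integral>\<^sup>+u. ennreal (exp (- u)) * indicator {s..t} u \<partial>lborel)"
proof -
  have "(\<integral>\<^sup>+u. ennreal (exp (- u)) * indicator {s..t} u \<partial>lborel)
      = ennreal ((- exp (- t)) - (- exp (- s)))"
    using assms by (intro nn_integral_FTC_Icc) (auto intro!: derivative_eq_intros)
  then show ?thesis
    using assms by (simp add: ennreal_plus[symmetric] del: ennreal_plus)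
qed

lemma nn_integral_disc_layers:
  assumes t: "0 \<le> t"
  shows "(\<integral>\<^sup>+p. \<integral>\<^sup>+u. ennreal (exp (- u)) * indicator (disc_layers t) (p, u) \<partial>lborel \<partial>lborel)
    = ennreal (pi * (1 - (t + 1) * exp (- t)))" (is "?I = _")
proof -
  have "?I = (\<integral>\<^sup>+u. \<integral>\<^sup>+p. ennreal (exp (- u)) * indicator (disc_layers t) (p, u) \<partial>lborel \<partial>lborel)"
    by (rule lborel_pair.Fubini'[symmetric]) measurable
  also have "\<dots> = (\<integral>\<^sup>+u. ennreal (pi * (u * exp (- u))) * indicator {0..t} u \<partial>lborel)"
  proof (intro nn_integral_cong)
    fix u :: real
    have "(\<lambda>p. ennreal (exp (- u)) * indicator (disc_layers t) (p, u))
        = (\<lambda>p. ennreal (exp (- u)) * indicator {..t} u * indicator (disc u) p)"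
      by (auto simp: indicator_def fun_eq_iff)
    then have "(\<integral>\<^sup>+p. ennreal (exp (- u)) * indicator (disc_layers t) (p, u) \<partial>lborel)
        = ennreal (exp (- u)) * indicator {..t} u * ennreal (pi * u)"
      by (simp add: nn_integral_cmult_indicator emeasure_lborel_disc)
    then show "(\<integral>\<^sup>+p. ennreal (exp (- u)) * indicator (disc_layers t) (p, u) \<partial>lborel)
        = ennreal (pi * (u * exp (- u))) * indicator {0..t} u"
      by (cases "0 \<le> u")
        (simp_all add: indicator_def ennreal_mult[symmetric] ennreal_eq_0_iff mult_le_0_iff mult_ac)
  qed
  also have "\<dots> = ennreal ((- pi * (t + 1) * exp (- t)) - (- pi * (0 + 1) * exp (- 0)))"
    using t by (intro nn_integral_FTC_Icc) (auto intro!: derivative_eq_intros simp: algebra_simps)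
  finally show ?thesis
    by (simp add: algebra_simps)
qed

lemma nn_integral_gaussian_disc_eq_layers:
  "(\<integral>\<^sup>+p. indicator (disc t) p * ennreal (exp (- (norm p)\<^sup>2)) \<partial>lborel)
    = ennreal (exp (- t)) * emeasure lborel (disc t)
      + (\<integral>\<^sup>+p. \<integral>\<^sup>+u. ennreal (exp (- u)) * indicator (disc_layers t) (p, u) \<partial>lborel \<partial>lborel)"
proof -
  have "indicator (disc t) p * ennreal (exp (- (norm p)\<^sup>2))
      = indicator (disc t) p * ennreal (exp (- t))
        + (\<integral>\<^sup>+u. ennreal (exp (- u)) * indicator (disc_layers t) (p, u) \<partial>lborel)" for p
  proof (cases "p \<in> disc t")
    case True
    then have "(\<lambda>u. ennreal (exp (- u)) * indicator (disc_layers t) (p, u))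
        = (\<lambda>u. ennreal (exp (- u)) * indicator {(norm p)\<^sup>2..t} u)"
      by (auto simp: indicator_def fun_eq_iff)
    with True show ?thesis
      using ennreal_exp_neg_eq_add_nn_integral[of "(norm p)\<^sup>2" t] by simp
  next
    case False
    then have "(\<lambda>u. ennreal (exp (- u)) * indicator (disc_layers t) (p, u)) = (\<lambda>u. 0)"
      by (auto simp: indicator_def fun_eq_iff)
    with False show ?thesis
      by simp
  qed
  then show ?thesis
    by (simp add: nn_integral_add nn_integral_cmult_indicator mult.commute)
qed

lemma nn_integral_gaussian_disc:
  assumes t: "0 \<le> t"
  shows "(\<integral>\<^sup>+p. indicator (disc t) p * ennreal (exp (- (norm p)\<^sup>2)) \<partial>lborel)
    = ennreal (pi * (1 - exp (- t)))"
proof -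
  have "(t + 1) * exp (- t) \<le> 1"
    using exp_ge_add_one_self[of t] by (simp add: exp_minus field_simps)
  then have "ennreal (exp (- t)) * ennreal (pi * t) + ennreal (pi * (1 - (t + 1) * exp (- t)))
      = ennreal (exp (- t) * (pi * t) + pi * (1 - (t + 1) * exp (- t)))"
    using t by (simp add: ennreal_mult ennreal_plus)
  also have "exp (- t) * (pi * t) + pi * (1 - (t + 1) * exp (- t)) = pi * (1 - exp (- t))"
    by (simp add: algebra_simps)
  finally show ?thesis
    by (simp only: nn_integral_gaussian_disc_eq_layers emeasure_lborel_disc
        nn_integral_disc_layers[OF t])
qed

context prob_space
begin

lemma emeasure_sum_sq_normal_le:
  assumes A: "distributed M lborel A (normal_density 0 (sqrt (1/2)))"
    and B: "distributed M lborel B (normal_density 0 (sqrt (1/2)))"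
    and ind: "indep_var borel A borel B" and t: "0 \<le> t"
  shows "emeasure M {\<omega>\<in>space M. (A \<omega>)\<^sup>2 + (B \<omega>)\<^sup>2 \<le> t} = ennreal (1 - exp (- t))"
proof -
  have C_sets: "disc t \<in> sets (lborel \<Otimes>\<^sub>M lborel)"
    unfolding lborel_prod by measurable
  have "indep_var lborel A lborel B"
    using ind by (simp add: indep_var_eq)
  then have joint: "distributed M (lborel \<Otimes>\<^sub>M lborel) (\<lambda>\<omega>. (A \<omega>, B \<omega>))
      (\<lambda>(x, y). ennreal (normal_density 0 (sqrt (1/2)) x) * ennreal (normal_density 0 (sqrt (1/2)) y))"
    by (intro distributed_joint_indep A B) (simp_all add: lborel.sigma_finite_measure_axioms)
  have "emeasure M {\<omega>\<in>space M. (A \<omega>)\<^sup>2 + (B \<omega>)\<^sup>2 \<le> t}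
      = emeasure M ((\<lambda>\<omega>. (A \<omega>, B \<omega>)) -` disc t \<inter> space M)"
    by (auto simp: norm_Pair intro!: arg_cong[where f="emeasure M"])
  also have "\<dots> = (\<integral>\<^sup>+p. (\<lambda>(x, y). ennreal (normal_density 0 (sqrt (1/2)) x) * ennreal (normal_density 0 (sqrt (1/2)) y)) p
      * indicator (disc t) p \<partial>(lborel \<Otimes>\<^sub>M lborel))"
    by (rule distributed_emeasure[OF joint C_sets])
  also have "\<dots> = (\<integral>\<^sup>+p. ennreal (1 / pi) * (indicator (disc t) p * ennreal (exp (- (norm p)\<^sup>2))) \<partial>lborel)"
    unfolding lborel_prod
    by (intro nn_integral_cong)
      (auto simp: normal_density_def norm_Pair indicator_def ennreal_mult[symmetric] exp_add[symmetric] field_simps)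
  also have "\<dots> = ennreal (1 / pi) * ennreal (pi * (1 - exp (- t)))"
    by (simp add: nn_integral_cmult nn_integral_gaussian_disc[OF t])
  also have "\<dots> = ennreal (1 - exp (- t))"
    using t by (simp add: ennreal_mult[symmetric])
  finally show ?thesis .
qed

lemma distributed_sum_sq_normal_exponential:
  assumes A: "distributed M lborel A (normal_density 0 (sqrt (1/2)))"
    and B: "distributed M lborel B (normal_density 0 (sqrt (1/2)))"
    and ind: "indep_var borel A borel B"
  shows "distributed M lborel (\<lambda>\<omega>. (A \<omega>)\<^sup>2 + (B \<omega>)\<^sup>2) (exponential_density 1)"
proof (rule exponential_distributedI)
  show "(\<lambda>\<omega>. (A \<omega>)\<^sup>2 + (B \<omega>)\<^sup>2) \<in> borel_measurable M"
    using distributed_measurable[OF A] distributed_measurable[OF B] by simp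
  fix t :: real
  assume "0 \<le> t"
  then show "emeasure M {\<omega>\<in>space M. (A \<omega>)\<^sup>2 + (B \<omega>)\<^sup>2 \<le> t} = 1 - ennreal (exp (- t * 1))"
    by (simp add: emeasure_sum_sq_normal_le[OF A B ind] ennreal_minus flip: ennreal_1)
qed (rule zero_less_one)

lemma indep_var_sym:
  assumes "indep_var Ma A Mb B"
  shows "indep_var Mb B Ma A"
proof -
  let ?SA = "sigma_sets (space M) {A -` X \<inter> space M | X. X \<in> sets Ma}"
  let ?SB = "sigma_sets (space M) {B -` X \<inter> space M | X. X \<in> sets Mb}"
  have rv: "random_variable Ma A" "random_variable Mb B" and ind: "indep_set ?SA ?SB"
    using assms by (simp_all add: indep_var_eq)
  have "indep_set ?SB ?SA"
  proof (rule indep_setI)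
    show "?SB \<subseteq> events" "?SA \<subseteq> events"
      using indep_setD_ev1[OF ind] indep_setD_ev2[OF ind] by simp_all
    fix a b
    assume "a \<in> ?SB" "b \<in> ?SA"
    then show "prob (a \<inter> b) = prob a * prob b"
      using indep_setD[OF ind, of b a] by (simp add: Int_commute mult.commute)
  qed
  with rv show ?thesis
    by (simp add: indep_var_eq)
qed

lemma emeasure_indep_pred_conv_fst:
  assumes ind: "indep_var Mx X My Y"
    and [measurable]: "Measurable.pred (Mx \<Otimes>\<^sub>M My) (\<lambda>p. P (fst p) (snd p))"
  shows "emeasure M {\<omega>\<in>space M. P (X \<omega>) (Y \<omega>)}
    = (\<integral>\<^sup>+x. emeasure (distr M My Y) {y\<in>space My. P x y} \<partial>distr M Mx X)"
proof -
  have rv[measurable]: "random_variable Mx X" "random_variable My Y"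
    using ind by (simp_all add: indep_var_rv1 indep_var_rv2)
  have distr_eq: "distr M Mx X \<Otimes>\<^sub>M distr M My Y = distr M (Mx \<Otimes>\<^sub>M My) (\<lambda>\<omega>. (X \<omega>, Y \<omega>))"
    using ind by (simp add: indep_var_distribution_eq)
  interpret pair_prob_space "distr M Mx X" "distr M My Y"
    by (simp add: pair_prob_space_def pair_sigma_finite_def prob_space_distr
        prob_space_imp_sigma_finite)
  let ?S = "{p\<in>space (Mx \<Otimes>\<^sub>M My). P (fst p) (snd p)}"
  have "emeasure M {\<omega>\<in>space M. P (X \<omega>) (Y \<omega>)} = emeasure (distr M (Mx \<Otimes>\<^sub>M My) (\<lambda>\<omega>. (X \<omega>, Y \<omega>))) ?S"
    by (subst emeasure_distr)
      (auto simp: space_pair_measure rv[THEN measurable_space] intro!: arg_cong[where f="emeasure M"])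
  also have "\<dots> = emeasure (distr M Mx X \<Otimes>\<^sub>M distr M My Y) ?S"
    by (simp only: distr_eq)
  also have "\<dots> = (\<integral>\<^sup>+x. emeasure (distr M My Y) (Pair x -` ?S) \<partial>distr M Mx X)"
    by (rule M2.emeasure_pair_measure_alt) simp
  also have "\<dots> = (\<integral>\<^sup>+x. emeasure (distr M My Y) {y\<in>space My. P x y} \<partial>distr M Mx X)"
    by (intro nn_integral_cong arg_cong[where f="emeasure _"]) (auto simp: space_pair_measure)
  finally show ?thesis .
qed

lemma emeasure_indep_pred_conv_snd:
  assumes ind: "indep_var Mx X My Y"
    and [measurable]: "Measurable.pred (Mx \<Otimes>\<^sub>M My) (\<lambda>p. P (fst p) (snd p))"
  shows "emeasure M {\<omega>\<in>space M. P (X \<omega>) (Y \<omega>)}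
    = (\<integral>\<^sup>+y. emeasure (distr M Mx X) {x\<in>space Mx. P x y} \<partial>distr M My Y)"
proof -
  have "Measurable.pred (My \<Otimes>\<^sub>M Mx) (\<lambda>p. P (snd p) (fst p))"
    using measurable_pair_swap[OF assms(2)] by (simp add: split_beta')
  then show ?thesis
    using emeasure_indep_pred_conv_fst[OF indep_var_sym[OF ind], of "\<lambda>y x. P x y"] by simp
qed

lemma prob_square_eq_indep_null:
  fixes X Z :: "'a \<Rightarrow> real"
  assumes ind: "indep_var borel X borel Z" and X: "distributed M lborel X f"
  shows "prob {\<omega>\<in>space M. (X \<omega>)\<^sup>2 = Z \<omega>} = 0"
proof -
  have distr_X: "distr M borel X = density lborel f"
    using distributed_distr_eq_density[OF X] by (metis distr_cong sets_lborel)
  have section_null: "emeasure (density lborel f) {x. x\<^sup>2 = z} = 0" for z :: real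
  proof -
    have "{x :: real. x\<^sup>2 = z} \<subseteq> {sqrt z, - sqrt z}"
      by (auto simp: real_sqrt_abs abs_if)
    then have null: "{x :: real. x\<^sup>2 = z} \<in> null_sets lborel"
      by (meson finite.emptyI finite.insertI finite_imp_null_set_lborel finite_subset)
    then have "emeasure (density lborel f) {x. x\<^sup>2 = z} = (\<integral>\<^sup>+x. f x * indicator {x. x\<^sup>2 = z} x \<partial>lborel)"
      using X by (intro emeasure_density) (auto simp: distributed_def)
    also have "\<dots> = 0"
      using null by (rule nn_integral_null_set)
    finally show ?thesis .
  qed
  show ?thesis
    using emeasure_indep_pred_conv_snd[OF ind, of "\<lambda>x z. x\<^sup>2 = z"]
    by (simp add: distr_X section_null measure_def)
qed

lemma nn_integral_exponential_density_mult_exp: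
  assumes l: "0 < l" and k: "0 \<le> k"
  shows "(\<integral>\<^sup>+x. ennreal (exponential_density l x) * ennreal (exp (- k * x)) \<partial>lborel) = ennreal (l / (l + k))"
proof -
  interpret exponential: prob_space "density lborel (exponential_density (l + k))"
    using l k by (intro prob_space_exponential_density) simp
  have "l * exp (- x * l) * exp (- k * x) = l / (l + k) * ((l + k) * exp (- x * (l + k)))" for x
  proof -
    have "exp (- x * l) * exp (- k * x) = exp (- x * (l + k))"
      unfolding mult_exp_exp by (simp add: algebra_simps)
    then show ?thesis
      using l k by (simp add: field_simps)
  qed
  then have "(\<integral>\<^sup>+x. ennreal (exponential_density l x) * ennreal (exp (- k * x)) \<partial>lborel)
      = (\<integral>\<^sup>+x. ennreal (l / (l + k)) * ennreal (exponential_density (l + k) x) \<partial>lborel)"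
    using l k by (intro nn_integral_cong) (simp add: exponential_density_def ennreal_mult[symmetric])
  also have "\<dots> = ennreal (l / (l + k)) * emeasure (density lborel (exponential_density (l + k))) UNIV"
    by (simp add: nn_integral_cmult emeasure_density)
  finally show ?thesis
    using exponential.emeasure_space_1 by simp
qed

lemma prob_exponential_scaled_less:
  assumes X: "distributed M lborel X (exponential_density 1)"
    and Y: "distributed M lborel Y (exponential_density 1)"
    and ind: "indep_var borel X borel Y" and c1: "0 \<le> c1" and c2: "0 < c2"
  shows "prob {\<omega>\<in>space M. c1 * X \<omega> < c2 * Y \<omega>} = c2 / (c1 + c2)"
proof -
  have distr_X: "distr M borel X = density lborel (exponential_density 1)"
    using distributed_distr_eq_density[OF X] by (metis distr_cong sets_lborel)
  have [measurable]: "Y \<in> borel_measurable M"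
    using ind by (rule indep_var_rv2)
  have "emeasure M {\<omega>\<in>space M. c1 * X \<omega> < c2 * Y \<omega>}
      = (\<integral>\<^sup>+x. emeasure (distr M borel Y) {y. c1 * x < c2 * y} \<partial>density lborel (exponential_density 1))"
    using emeasure_indep_pred_conv_fst[OF ind, of "\<lambda>x y. c1 * x < c2 * y"] by (simp add: distr_X)
  also have "\<dots> = (\<integral>\<^sup>+x. ennreal (exp (- (c1 / c2) * x)) \<partial>density lborel (exponential_density 1))"
  proof (rule nn_integral_cong_AE)
    have "AE x in density lborel (exponential_density 1). 0 \<le> x"
      by (subst AE_density) (auto simp: exponential_density_def)
    then show "AE x in density lborel (exponential_density 1).
        emeasure (distr M borel Y) {y. c1 * x < c2 * y} = ennreal (exp (- (c1 / c2) * x))"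
    proof (rule AE_mp, intro AE_I2 impI)
      fix x :: real
      assume "0 \<le> x"
      have "emeasure (distr M borel Y) {y. c1 * x < c2 * y} = emeasure M {\<omega>\<in>space M. c1 * x / c2 < Y \<omega>}"
        using c2 by (subst emeasure_distr) (auto simp: field_simps intro!: arg_cong[where f="emeasure M"])
      also have "\<dots> = ennreal (exp (- (c1 * x / c2) * 1))"
        using \<open>0 \<le> x\<close> c1 c2 by (simp add: emeasure_eq_measure exponential_distributedD_gt[OF Y])
      finally show "emeasure (distr M borel Y) {y. c1 * x < c2 * y} = ennreal (exp (- (c1 / c2) * x))"
        by simp
    qed
  qed
  also have "\<dots> = (\<integral>\<^sup>+x. ennreal (exponential_density 1 x) * ennreal (exp (- (c1 / c2) * x)) \<partial>lborel)"
    by (rule nn_integral_density) auto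
  also have "\<dots> = ennreal (1 / (1 + c1 / c2))"
    using c1 c2 by (intro nn_integral_exponential_density_mult_exp) auto
  finally show ?thesis
    using c1 c2 by (simp add: measure_def field_simps)
qed

lemma prob_exponential_scaled_greater:
  assumes X: "distributed M lborel X (exponential_density 1)"
    and Y: "distributed M lborel Y (exponential_density 1)"
    and ind: "indep_var borel X borel Y" and c1: "0 \<le> c1" and c2: "0 < c2"
  shows "prob {\<omega>\<in>space M. c1 * X \<omega> > c2 * Y \<omega>} = c1 / (c1 + c2)"
proof (cases "c1 = 0")
  case True
  have [measurable]: "Y \<in> borel_measurable M"
    using ind by (rule indep_var_rv2)
  have "prob {\<omega>\<in>space M. c1 * X \<omega> > c2 * Y \<omega>} \<le> prob {\<omega>\<in>space M. Y \<omega> \<le> 0}"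
    using True c2 by (intro finite_measure_mono) (auto simp: mult_less_0_iff)
  also have "\<dots> = 0"
    using exponential_distributedD_le[OF Y, of 0] by simp
  finally show ?thesis
    using True by (simp add: measure_le_0_iff)
next
  case False
  then show ?thesis
    using prob_exponential_scaled_less[OF Y X indep_var_sym[OF ind], of c2 c1] c1 c2
    by (simp add: add.commute)
qed

lemma prob_less_eq_1_minus_prob_greater:
  fixes U1 U2 :: "'a \<Rightarrow> real"
  assumes [measurable]: "U1 \<in> borel_measurable M" "U2 \<in> borel_measurable M"
    and tie: "prob {\<omega>\<in>space M. U1 \<omega> = U2 \<omega>} = 0"
  shows "prob {\<omega>\<in>space M. U1 \<omega> < U2 \<omega>} = 1 - prob {\<omega>\<in>space M. U1 \<omega> > U2 \<omega>}"
proof -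
  have "{\<omega>\<in>space M. U1 \<omega> < U2 \<omega>} = space M - ({\<omega>\<in>space M. U1 \<omega> > U2 \<omega>} \<union> {\<omega>\<in>space M. U1 \<omega> = U2 \<omega>})"
    by auto
  moreover have "prob ({\<omega>\<in>space M. U1 \<omega> > U2 \<omega>} \<union> {\<omega>\<in>space M. U1 \<omega> = U2 \<omega>})
      = prob {\<omega>\<in>space M. U1 \<omega> > U2 \<omega>} + prob {\<omega>\<in>space M. U1 \<omega> = U2 \<omega>}"
    by (rule finite_measure_Union) auto
  ultimately show ?thesis
    by (simp add: prob_compl tie)
qed

lemma indep_var_of_disjoint_blocks:
  assumes ind: "indep_vars M' X I" and blocks: "A \<inter> B = {}" "A \<subseteq> I" "B \<subseteq> I"
    and f: "f \<in> measurable (PiM A M') N1" and g: "g \<in> measurable (PiM B M') N2"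
    and F: "\<And>\<omega>. F \<omega> = f (restrict (\<lambda>i. X i \<omega>) A)"
    and G: "\<And>\<omega>. G \<omega> = g (restrict (\<lambda>i. X i \<omega>) B)"
  shows "indep_var N1 F N2 G"
proof -
  have "indep_var N1 (f \<circ> (\<lambda>\<omega>. restrict (\<lambda>i. X i \<omega>) A)) N2 (g \<circ> (\<lambda>\<omega>. restrict (\<lambda>i. X i \<omega>) B))"
    by (rule indep_var_compose[OF indep_var_restrict[OF ind blocks] f g])
  moreover have "f \<circ> (\<lambda>\<omega>. restrict (\<lambda>i. X i \<omega>) A) = F" "g \<circ> (\<lambda>\<omega>. restrict (\<lambda>i. X i \<omega>) B) = G"
    using F G by (auto simp: fun_eq_iff)
  ultimately show ?thesis
    by simp
qed

lemma prob_decoding_order_error: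
  fixes U1 U2 E1 E2 :: "'a \<Rightarrow> real"
  assumes ind: "indep_var (borel \<Otimes>\<^sub>M borel) (\<lambda>\<omega>. (U1 \<omega>, U2 \<omega>)) (borel \<Otimes>\<^sub>M borel) (\<lambda>\<omega>. (E1 \<omega>, E2 \<omega>))"
    and E1: "distributed M lborel E1 (exponential_density 1)"
    and E2: "distributed M lborel E2 (exponential_density 1)"
    and ind_E: "indep_var borel E1 borel E2"
    and tie: "prob {\<omega>\<in>space M. U1 \<omega> = U2 \<omega>} = 0"
    and c1: "0 \<le> c1" and c2: "0 < c2"
  shows "prob {\<omega>\<in>space M. U1 \<omega> < U2 \<omega> \<and> c1 * E1 \<omega> < c2 * E2 \<omega>}
       + prob {\<omega>\<in>space M. U1 \<omega> > U2 \<omega> \<and> c1 * E1 \<omega> > c2 * E2 \<omega>}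
     = (c1 / c2 - 1) / (c1 / c2 + 1) * prob {\<omega>\<in>space M. U1 \<omega> > U2 \<omega>} + 1 / (c1 / c2 + 1)"
proof -
  have U1: "U1 \<in> borel_measurable M" and U2: "U2 \<in> borel_measurable M"
    using indep_var_rv1[OF ind] by (simp_all add: measurable_pair_iff comp_def)
  have sets:
    "{p\<in>space (borel \<Otimes>\<^sub>M borel). fst p < (snd p :: real)} \<in> sets (borel \<Otimes>\<^sub>M borel)"
    "{p\<in>space (borel \<Otimes>\<^sub>M borel). fst p > (snd p :: real)} \<in> sets (borel \<Otimes>\<^sub>M borel)"
    "{p\<in>space (borel \<Otimes>\<^sub>M borel). c1 * fst p < c2 * (snd p :: real)} \<in> sets (borel \<Otimes>\<^sub>M borel)"
    "{p\<in>space (borel \<Otimes>\<^sub>M borel). c1 * fst p > c2 * (snd p :: real)} \<in> sets (borel \<Otimes>\<^sub>M borel)"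
    by (measurable; fail)+
  have both_less: "prob {\<omega>\<in>space M. U1 \<omega> < U2 \<omega> \<and> c1 * E1 \<omega> < c2 * E2 \<omega>}
      = prob {\<omega>\<in>space M. U1 \<omega> < U2 \<omega>} * (c2 / (c1 + c2))"
    using prob_indep_random_variable[OF ind sets(1,3)] prob_exponential_scaled_less[OF E1 E2 ind_E c1 c2]
    by (simp add: space_pair_measure)
  have both_greater: "prob {\<omega>\<in>space M. U1 \<omega> > U2 \<omega> \<and> c1 * E1 \<omega> > c2 * E2 \<omega>}
      = prob {\<omega>\<in>space M. U1 \<omega> > U2 \<omega>} * (c1 / (c1 + c2))"
    using prob_indep_random_variable[OF ind sets(2,4)] prob_exponential_scaled_greater[OF E1 E2 ind_E c1 c2]
    by (simp add: space_pair_measure)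
  have "c1 / c2 + 1 = (c1 + c2) / c2" "c1 / c2 - 1 = (c1 - c2) / c2"
    using c2 by (simp_all add: field_simps)
  then have ratio: "(c1 / c2 - 1) / (c1 / c2 + 1) = (c1 - c2) / (c1 + c2)" "1 / (c1 / c2 + 1) = c2 / (c1 + c2)"
    using c2 by simp_all
  have "c1 + c2 \<noteq> 0"
    using c1 c2 by simp
  then show ?thesis
    unfolding both_less both_greater prob_less_eq_1_minus_prob_greater[OF U1 U2 tie] ratio
    by (simp add: field_simps)
qed

end

lemma cmod_chan_squared: "(cmod (chan \<alpha> d h))\<^sup>2 = d powr (- \<alpha>) * (cmod h)\<^sup>2"
  by (simp add: chan_def norm_mult power_mult_distrib power2_eq_square powr_add[symmetric])

text \<open>For \<open>d1 = 0\<close> both sides are \<open>0\<close>, as \<open>0 powr a = 0\<close>.\<close>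
lemma powr_ratio_eq_neg_powr_ratio:
  fixes d1 d2 a :: real
  assumes "0 \<le> d1" and "0 < d2"
  shows "d2 powr a / d1 powr a = d1 powr (- a) / d2 powr (- a)"
  using assms by (cases "d1 = 0") (simp_all add: powr_minus divide_inverse mult.commute)

theorem corollary1:
  fixes M :: "'a measure"
    and x1 y1 x2 y2 \<sigma> \<alpha> :: real
    and xh1 yh1 xh2 yh2 a1 b1 a2 b2 :: "'a \<Rightarrow> real"
  assumes "prob_space M"
    and "\<sigma> > 0" and "\<alpha> > 0"
    and "bs_dist x1 y1 < bs_dist x2 y2"
    and "distributed M lborel xh1 (normal_density x1 \<sigma>)"
    and "distributed M lborel yh1 (normal_density y1 \<sigma>)"
    and "distributed M lborel xh2 (normal_density x2 \<sigma>)"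
    and "distributed M lborel yh2 (normal_density y2 \<sigma>)"
    and "distributed M lborel a1 (normal_density 0 (sqrt (1/2)))"
    and "distributed M lborel b1 (normal_density 0 (sqrt (1/2)))"
    and "distributed M lborel a2 (normal_density 0 (sqrt (1/2)))"
    and "distributed M lborel b2 (normal_density 0 (sqrt (1/2)))"
    and "prob_space.indep_vars M (\<lambda>_. borel)
           (\<lambda>i. [xh1, yh1, xh2, yh2, a1, b1, a2, b2] ! i) {0..<8}"
  shows "(let d1 = bs_dist x1 y1; d2 = bs_dist x2 y2;
             dh1 = (\<lambda>\<omega>. bs_dist (xh1 \<omega>) (yh1 \<omega>));
             dh2 = (\<lambda>\<omega>. bs_dist (xh2 \<omega>) (yh2 \<omega>));
             r1 = (\<lambda>\<omega>. chan \<alpha> d1 (Complex (a1 \<omega>) (b1 \<omega>)));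
             r2 = (\<lambda>\<omega>. chan \<alpha> d2 (Complex (a2 \<omega>) (b2 \<omega>)));
             D = d2 powr \<alpha> / d1 powr \<alpha>;
             Pe1 = measure M {\<omega> \<in> space M. dh1 \<omega> > dh2 \<omega>};
             Pe2 = measure M {\<omega> \<in> space M. dh1 \<omega> < dh2 \<omega> \<and> (cmod (r1 \<omega>))\<^sup>2 < (cmod (r2 \<omega>))\<^sup>2}
                 + measure M {\<omega> \<in> space M. dh1 \<omega> > dh2 \<omega> \<and> (cmod (r1 \<omega>))\<^sup>2 > (cmod (r2 \<omega>))\<^sup>2}
         in Pe2 = (D - 1) / (D + 1) * Pe1 + 1 / (D + 1))"
proof -
  interpret prob_space M
    by fact
  note blocks = indep_var_of_disjoint_blocks[OF assms(13)]
  have ind_a1b1: "indep_var borel a1 borel b1"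
    by (rule blocks[of "{4}" "{5}" "\<lambda>v. v 4" _ "\<lambda>v. v 5"]) auto
  have ind_a2b2: "indep_var borel a2 borel b2"
    by (rule blocks[of "{6}" "{7}" "\<lambda>v. v 6" _ "\<lambda>v. v 7"]) auto
  have ind_fading: "indep_var borel (\<lambda>\<omega>. (a1 \<omega>)\<^sup>2 + (b1 \<omega>)\<^sup>2) borel (\<lambda>\<omega>. (a2 \<omega>)\<^sup>2 + (b2 \<omega>)\<^sup>2)"
    by (rule blocks[of "{4, 5}" "{6, 7}" "\<lambda>v. (v 4)\<^sup>2 + (v 5)\<^sup>2" _ "\<lambda>v. (v 6)\<^sup>2 + (v 7)\<^sup>2"]) auto
  have ind_tie: "indep_var borel xh1 borel (\<lambda>\<omega>. (xh2 \<omega>)\<^sup>2 + (yh2 \<omega>)\<^sup>2 - (yh1 \<omega>)\<^sup>2)"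
    by (rule blocks[of "{0}" "{1, 2, 3}" "\<lambda>v. v 0" _ "\<lambda>v. (v 2)\<^sup>2 + (v 3)\<^sup>2 - (v 1)\<^sup>2"]) auto
  have ind_positions_fading:
    "indep_var (borel \<Otimes>\<^sub>M borel) (\<lambda>\<omega>. (bs_dist (xh1 \<omega>) (yh1 \<omega>), bs_dist (xh2 \<omega>) (yh2 \<omega>)))
       (borel \<Otimes>\<^sub>M borel) (\<lambda>\<omega>. ((a1 \<omega>)\<^sup>2 + (b1 \<omega>)\<^sup>2, (a2 \<omega>)\<^sup>2 + (b2 \<omega>)\<^sup>2))"
    by (rule blocks[of "{0, 1, 2, 3}" "{4, 5, 6, 7}" "\<lambda>v. (bs_dist (v 0) (v 1), bs_dist (v 2) (v 3))" _
          "\<lambda>v. ((v 4)\<^sup>2 + (v 5)\<^sup>2, (v 6)\<^sup>2 + (v 7)\<^sup>2)"]) (auto simp: bs_dist_def)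
  have tie: "prob {\<omega>\<in>space M. bs_dist (xh1 \<omega>) (yh1 \<omega>) = bs_dist (xh2 \<omega>) (yh2 \<omega>)} = 0"
    using prob_square_eq_indep_null[OF ind_tie assms(5)] by (simp add: bs_dist_def eq_diff_eq)
  have d1: "0 \<le> bs_dist x1 y1"
    by (simp add: bs_dist_def)
  then have d2: "0 < bs_dist x2 y2"
    using assms(4) by linarith
  show ?thesis
    unfolding Let_def cmod_chan_squared
    unfolding cmod_power2 complex.sel powr_ratio_eq_neg_powr_ratio[OF d1 d2]
    by (rule prob_decoding_order_error[OF ind_positions_fading
          distributed_sum_sq_normal_exponential[OF assms(9,10) ind_a1b1]
          distributed_sum_sq_normal_exponential[OF assms(11,12) ind_a2b2] ind_fading tie])
      (use d2 in auto)
qed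

end
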